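(* For every sufficiently small $\nu>0$ there exists $\alpha_0>0$ such that for all $\alpha,\varepsilon\in(0,\alpha_0]$ there exists $\gamma_0>0$ such that for all $\gamma\in(0,\gamma_0]$ there exists $n_0$ such that for all $n\ge n_0$: every graph $G$ on $n$ vertices with $\delta(G)\ge n/2$ that is $\gamma$-close to $K_{n/2,n/2}$ is an $(\alpha,\varepsilon,\nu)$-superextremal biclique.
   Context: A graph $G$ on $n$ vertices is $\gamma$-close to $K_{n/2,n/2}$ if there exists $A\subseteq V(G)$ with $|A|=\lfloor n/2\rfloor$ such that $G[A]$ has at most $\gamma n^2$ edges. $d(v,X)$ is the number of neighbours of $v$ in $X$. A graph $G$ on $n$ vertices is an $(\alpha,\varepsilon,\nu)$-superextremal biclique if there is a partition $V(G)=A\uplus B$ with: (B1) $0\le |B|-|A|\le\alpha n$; (B2) $d(a,B)\ge(1/2-\varepsilon)n$ for all but at most $\alpha n$ vertices $a\in A$; (B3) $d(a,B)\ge\nu n$ for all $a\in A$; (B4) $d(b,A)\ge(1/2-\varepsilon)n$ for all but at most $\alpha n$ vertices $b\in B$; (B5) $d(b,A)\ge(1/4-\varepsilon)n$ for all $b\in B$; (B6) if $|A|\ne\lfloor n/2\rfloor$, then $d(b,B)\le 2\nu n$ for all $b\in B$. *)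

theory Defs
  imports Main Complex_Main
begin

text \<open>A finite simple graph with vertex set V (vertices are natural numbers, which
is no loss of generality up to isomorphism) and a symmetric irreflexive
adjacency relation E restricted to V.\<close>
definition simple_graph :: "nat set \<Rightarrow> (nat \<Rightarrow> nat \<Rightarrow> bool) \<Rightarrow> bool" where
  "simple_graph V E \<longleftrightarrow> finite V \<and> (\<forall>u v. E u v \<longrightarrow> E v u) \<and> (\<forall>v. \<not> E v v)
     \<and> (\<forall>u v. E u v \<longrightarrow> u \<in> V \<and> v \<in> V)"

definition nbdeg :: "(nat \<Rightarrow> nat \<Rightarrow> bool) \<Rightarrow> nat \<Rightarrow> nat set \<Rightarrow> nat" where
  "nbdeg E v X = card {u \<in> X. E v u}"

definition min_degree_ge :: "nat set \<Rightarrow> (nat \<Rightarrow> nat \<Rightarrow> bool) \<Rightarrow> real \<Rightarrow> bool" where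
  "min_degree_ge V E d \<longleftrightarrow> (\<forall>v\<in>V. real (nbdeg E v V) \<ge> d)"

definition edges_in :: "(nat \<Rightarrow> nat \<Rightarrow> bool) \<Rightarrow> nat set \<Rightarrow> nat" where
  "edges_in E A = card {{u, v} | u v. u \<in> A \<and> v \<in> A \<and> E u v}"

definition gamma_close :: "real \<Rightarrow> nat set \<Rightarrow> (nat \<Rightarrow> nat \<Rightarrow> bool) \<Rightarrow> bool" where
  "gamma_close \<gamma> V E \<longleftrightarrow> (let n = card V in
     \<exists>A \<subseteq> V. card A = n div 2 \<and> real (edges_in E A) \<le> \<gamma> * real n ^ 2)"

definition superextremal_biclique ::
  "real \<Rightarrow> real \<Rightarrow> real \<Rightarrow> nat set \<Rightarrow> (nat \<Rightarrow> nat \<Rightarrow> bool) \<Rightarrow> bool" where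
  "superextremal_biclique \<alpha> \<epsilon> \<nu> V E \<longleftrightarrow> (let n = real (card V) in
     \<exists>A B. A \<union> B = V \<and> A \<inter> B = {} \<and>
       \<comment> \<open>(B1)\<close>
       0 \<le> real (card B) - real (card A) \<and> real (card B) - real (card A) \<le> \<alpha> * n \<and>
       \<comment> \<open>(B2)\<close>
       real (card {a \<in> A. real (nbdeg E a B) < (1/2 - \<epsilon>) * n}) \<le> \<alpha> * n \<and>
       \<comment> \<open>(B3)\<close>
       (\<forall>a\<in>A. real (nbdeg E a B) \<ge> \<nu> * n) \<and>
       \<comment> \<open>(B4)\<close>
       real (card {b \<in> B. real (nbdeg E b A) < (1/2 - \<epsilon>) * n}) \<le> \<alpha> * n \<and>
       \<comment> \<open>(B5)\<close>
       (\<forall>b\<in>B. real (nbdeg E b A) \<ge> (1/4 - \<epsilon>) * n) \<and>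
       \<comment> \<open>(B6)\<close>
       (card A \<noteq> card V div 2 \<longrightarrow> (\<forall>b\<in>B. real (nbdeg E b B) \<le> 2 * \<nu> * n)))"

end

theory Submission
  imports Defs
begin

text \<open>Let \<open>A\<^sub>0\<close> be a set of \<open>\<lfloor>n/2\<rfloor>\<close> vertices spanning at most \<open>\<gamma> n\<^sup>2\<close> edges. Since every vertex
  has degree at least \<open>n/2\<close>, the cut between \<open>A\<^sub>0\<close> and its complement misses only \<open>O(\<gamma> n\<^sup>2)\<close>
  of the possible cross edges, and the same holds for a set \<open>A\<close> of the same size maximising the
  cut; maximality moreover gives every vertex of \<open>B = V - A\<close> at least as many neighbours in \<open>A\<close>
  as in \<open>B\<close>. By averaging, only \<open>O(\<gamma> n)\<close> vertices of \<open>A\<close> have fewer than \<open>3\<nu>n/2\<close> neighbours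
  in \<open>B\<close>, and only \<open>O(\<gamma> n/\<epsilon>)\<close> vertices on either side miss \<open>\<epsilon>n/4\<close> of their possible cross
  neighbours. Moving the low-degree vertices of \<open>A\<close> to \<open>B\<close>, and in exchange as many vertices of
  \<open>B\<close> with at least \<open>3\<nu>n/2\<close> neighbours in \<open>B\<close> as are available to \<open>A\<close>, changes every degree
  by \<open>O(\<gamma> n)\<close> and yields a partition satisfying (B1)--(B6).\<close>

lemma nbdeg_le_card: "finite X \<Longrightarrow> nbdeg E x X \<le> card X"
  unfolding nbdeg_def by (rule card_mono) auto

lemma nbdeg_mono: "X \<subseteq> Y \<Longrightarrow> finite Y \<Longrightarrow> nbdeg E x X \<le> nbdeg E x Y"
  unfolding nbdeg_def by (rule card_mono) auto

lemma nbdeg_Un_disjoint: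
  "finite X \<Longrightarrow> finite Y \<Longrightarrow> X \<inter> Y = {} \<Longrightarrow> nbdeg E x (X \<union> Y) = nbdeg E x X + nbdeg E x Y"
  unfolding nbdeg_def by (subst card_Un_disjoint[symmetric]) (auto intro!: arg_cong[where f = card])

lemma nbdeg_singleton: "nbdeg E x {y} = of_bool (E x y)"
  unfolding nbdeg_def by (cases "E x y") (auto simp: Collect_conv_if)

lemma nbdeg_insert_self: "\<not> E x x \<Longrightarrow> nbdeg E x (insert x X) = nbdeg E x X"
  unfolding nbdeg_def by (auto intro!: arg_cong[where f = card])

lemma nbdeg_Diff_self: "\<not> E x x \<Longrightarrow> nbdeg E x (X - {x}) = nbdeg E x X"
  unfolding nbdeg_def by (auto intro!: arg_cong[where f = card])

lemma nbdeg_eq_sum: "finite X \<Longrightarrow> nbdeg E x X = (\<Sum>v\<in>X. of_bool (E x v))"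
  unfolding nbdeg_def by (simp add: Collect_conj_eq Int_commute)

lemma sum_nbdeg_commute:
  assumes "finite S" "finite T" and E_sym: "\<And>u v. E u v \<Longrightarrow> E v u"
  shows "(\<Sum>u\<in>S. nbdeg E u T) = (\<Sum>v\<in>T. nbdeg E v S)"
proof -
  have "\<And>u v. E u v = E v u" using E_sym by blast
  then have "(\<Sum>u\<in>S. \<Sum>v\<in>T. of_bool (E u v)) = (\<Sum>v\<in>T. \<Sum>u\<in>S. (of_bool (E v u) :: nat))"
    by (subst sum.swap) simp
  then show ?thesis using assms by (simp add: nbdeg_eq_sum)
qed

lemma nbdeg_le_nbdeg_Diff_Un:
  assumes "finite X" "finite Y" "finite Z"
  shows "nbdeg E x X \<le> nbdeg E x (X - Y \<union> Z) + card Y"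
proof -
  have "{u \<in> X. E x u} \<subseteq> {u \<in> X - Y \<union> Z. E x u} \<union> Y" by auto
  then have "nbdeg E x X \<le> card ({u \<in> X - Y \<union> Z. E x u} \<union> Y)"
    unfolding nbdeg_def using assms by (intro card_mono) auto
  also have "\<dots> \<le> nbdeg E x (X - Y \<union> Z) + card Y"
    unfolding nbdeg_def by (rule card_Un_le)
  finally show ?thesis .
qed

lemma nbdeg_Diff_Un_le:
  assumes "finite X" "finite Z"
  shows "nbdeg E x (X - Y \<union> Z) \<le> nbdeg E x X + card Z"
proof -
  have "{u \<in> X - Y \<union> Z. E x u} \<subseteq> {u \<in> X. E x u} \<union> Z" by auto
  then have "nbdeg E x (X - Y \<union> Z) \<le> card ({u \<in> X. E x u} \<union> Z)"
    unfolding nbdeg_def using assms by (intro card_mono) auto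
  also have "\<dots> \<le> nbdeg E x X + card Z"
    unfolding nbdeg_def by (rule card_Un_le)
  finally show ?thesis .
qed

lemma sum_nbdeg_le_edges_in:
  assumes G: "simple_graph V E" and "A \<subseteq> V"
  shows "(\<Sum>a\<in>A. nbdeg E a A) \<le> 2 * edges_in E A"
proof -
  have "finite A" using assms finite_subset unfolding simple_graph_def by blast
  have irrefl: "\<And>v. \<not> E v v" using G unfolding simple_graph_def by blast
  define P where "P = (SIGMA a:A. {u \<in> A. E a u})"
  define Ed where "Ed = {{u, v} | u v. u \<in> A \<and> v \<in> A \<and> E u v}"
  have "finite Ed"
    unfolding Ed_def by (rule finite_subset[of _ "Pow A"]) (use \<open>finite A\<close> in auto)
  have card_Ed: "card {p \<in> P. R (fst p) (snd p)} \<le> card Ed" if "\<And>x y. R x y \<Longrightarrow> \<not> R y x" for R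
  proof (rule card_inj_on_le[where f = "\<lambda>p. {fst p, snd p}"])
    show "inj_on (\<lambda>p. {fst p, snd p}) {p \<in> P. R (fst p) (snd p)}"
      using that unfolding inj_on_def by (auto simp: doubleton_eq_iff)
    show "(\<lambda>p. {fst p, snd p}) ` {p \<in> P. R (fst p) (snd p)} \<subseteq> Ed"
      unfolding P_def Ed_def by force
  qed (rule \<open>finite Ed\<close>)
  have "P \<subseteq> {p \<in> P. fst p < snd p} \<union> {p \<in> P. snd p < fst p}"
    using irrefl unfolding P_def by clarsimp (metis linorder_neqE_nat)
  then have "card P \<le> card ({p \<in> P. fst p < snd p} \<union> {p \<in> P. snd p < fst p})"
    using \<open>finite A\<close> unfolding P_def by (intro card_mono) auto
  also have "\<dots> \<le> card {p \<in> P. fst p < snd p} + card {p \<in> P. snd p < fst p}"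
    by (rule card_Un_le)
  also have "\<dots> \<le> 2 * card Ed"
    using card_Ed[of "(<)"] card_Ed[of "\<lambda>x y. y < x"] by simp
  finally show ?thesis
    using \<open>finite A\<close> unfolding edges_in_def Ed_def P_def nbdeg_def by simp
qed

definition cut_size :: "nat set \<Rightarrow> (nat \<Rightarrow> nat \<Rightarrow> bool) \<Rightarrow> nat set \<Rightarrow> nat" where
  "cut_size V E S = (\<Sum>u\<in>S. nbdeg E u (V - S))"

lemma cut_size_complement:
  assumes G: "simple_graph V E" and "S \<subseteq> V"
  shows "cut_size V E (V - S) = cut_size V E S"
proof -
  have "V - (V - S) = S" using assms by auto
  moreover have "finite V" "\<And>u v. E u v \<Longrightarrow> E v u" using G unfolding simple_graph_def by auto
  ultimately show ?thesis
    unfolding cut_size_def using sum_nbdeg_commute[of "V - S" S E] finite_subset[OF \<open>S \<subseteq> V\<close>] by auto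
qed

lemma cut_size_insert:
  assumes G: "simple_graph V E" and S: "S \<subseteq> V" and y: "y \<in> V - S"
  shows "cut_size V E (insert y S) + nbdeg E y S = cut_size V E S + nbdeg E y (V - S)"
proof -
  have "finite V" and E_sym: "\<And>u v. E u v \<Longrightarrow> E v u" and "\<not> E y y"
    using G unfolding simple_graph_def by auto
  have "finite S" using finite_subset[OF S \<open>finite V\<close>] .
  have "V - insert y S = V - S - {y}" by auto
  then have "cut_size V E (insert y S) = nbdeg E y (V - S) + (\<Sum>u\<in>S. nbdeg E u (V - S - {y}))"
    unfolding cut_size_def using \<open>finite S\<close> y nbdeg_Diff_self[of E y, OF \<open>\<not> E y y\<close>] by simp
  moreover have "nbdeg E u (V - S) = nbdeg E u (V - S - {y}) + of_bool (E y u)" for u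
  proof -
    have "V - S = (V - S - {y}) \<union> {y}" using y by auto
    then show ?thesis
      using nbdeg_Un_disjoint[of "V - S - {y}" "{y}" E u] \<open>finite V\<close> E_sym
      by (auto simp: nbdeg_singleton)
  qed
  then have "cut_size V E S = (\<Sum>u\<in>S. nbdeg E u (V - S - {y})) + nbdeg E y S"
    unfolding cut_size_def using \<open>finite S\<close> by (simp add: sum.distrib nbdeg_eq_sum)
  ultimately show ?thesis by simp
qed

lemma cut_size_insert_gt:
  assumes "simple_graph V E" "S \<subseteq> V" "y \<in> V - S" "nbdeg E y S < nbdeg E y (V - S)"
  shows "cut_size V E S < cut_size V E (insert y S)"
  using cut_size_insert[OF assms(1-3)] assms(4) by linarith

lemma cut_size_remove_gt:
  assumes G: "simple_graph V E" and "S \<subseteq> V" "x \<in> S" "nbdeg E x (V - S) < nbdeg E x S"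
  shows "cut_size V E S < cut_size V E (S - {x})"
proof -
  have "\<not> E x x" using G unfolding simple_graph_def by auto
  have "cut_size V E (insert x (S - {x})) + nbdeg E x (S - {x})
      = cut_size V E (S - {x}) + nbdeg E x (V - (S - {x}))"
    using assms by (intro cut_size_insert) auto
  moreover have "insert x (S - {x}) = S" "V - (S - {x}) = insert x (V - S)" using assms by auto
  ultimately have "cut_size V E S + nbdeg E x S = cut_size V E (S - {x}) + nbdeg E x (V - S)"
    using nbdeg_insert_self[of E x] nbdeg_Diff_self[of E x] \<open>\<not> E x x\<close> by simp
  with assms(4) show ?thesis by linarith
qed

lemma cut_size_swap_gt:
  assumes G: "simple_graph V E" and S: "S \<subseteq> V" and x: "x \<in> S" and y: "y \<in> V - S"
    and "nbdeg E x (V - S) < nbdeg E x S" and "nbdeg E y S < nbdeg E y (V - S)"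
  shows "cut_size V E S < cut_size V E (insert y (S - {x}))"
proof -
  have "finite V" using G unfolding simple_graph_def by auto
  have "nbdeg E y (S - {x}) \<le> nbdeg E y S" "nbdeg E y (V - S) \<le> nbdeg E y (V - (S - {x}))"
    using \<open>finite V\<close> finite_subset[OF S] by (auto intro: nbdeg_mono)
  then have "cut_size V E (S - {x}) < cut_size V E (insert y (S - {x}))"
    using assms by (intro cut_size_insert_gt) auto
  with cut_size_remove_gt[OF G S x] assms show ?thesis by simp
qed

lemma cut_size_ge:
  assumes G: "simple_graph V E" and deg: "min_degree_ge V E (real (card V) / 2)" and "A \<subseteq> V"
  shows "real (card A) * real (card V) / 2 - 2 * real (edges_in E A) \<le> real (cut_size V E A)"
proof -
  have "finite V" using G unfolding simple_graph_def by auto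
  have "finite A" using finite_subset[OF \<open>A \<subseteq> V\<close> \<open>finite V\<close>] .
  have "nbdeg E a V = nbdeg E a A + nbdeg E a (V - A)" for a
    using nbdeg_Un_disjoint[of A "V - A" E a] \<open>finite V\<close> \<open>finite A\<close> \<open>A \<subseteq> V\<close>
    by (simp add: Un_absorb1)
  then have "(\<Sum>a\<in>A. real (nbdeg E a V)) = (\<Sum>a\<in>A. real (nbdeg E a A)) + real (cut_size V E A)"
    unfolding cut_size_def by (simp add: sum.distrib)
  moreover have "(\<Sum>a\<in>A. real (card V) / 2) \<le> (\<Sum>a\<in>A. real (nbdeg E a V))"
    using deg \<open>A \<subseteq> V\<close> unfolding min_degree_ge_def by (intro sum_mono) auto
  moreover have "(\<Sum>a\<in>A. real (nbdeg E a A)) \<le> 2 * real (edges_in E A)"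
    using sum_nbdeg_le_edges_in[OF G \<open>A \<subseteq> V\<close>] by (simp flip: of_nat_sum)
  ultimately show ?thesis by simp
qed

lemma exists_max_half_cut:
  assumes "finite V" "A0 \<subseteq> V" "card A0 = card V div 2"
  obtains A where "A \<subseteq> V" "card A = card V div 2"
    "\<And>A'. A' \<subseteq> V \<Longrightarrow> card A' = card V div 2 \<Longrightarrow> cut_size V E A' \<le> cut_size V E A"
proof -
  define halves where "halves = {A. A \<subseteq> V \<and> card A = card V div 2}"
  have "finite halves" unfolding halves_def
    by (rule finite_subset[of _ "Pow V"]) (use assms in auto)
  moreover have "A0 \<in> halves" unfolding halves_def using assms by auto
  ultimately obtain A where "A \<in> halves" "cut_size V E A = Max (cut_size V E ` halves)"
    using Max_in[of "cut_size V E ` halves"] by fastforce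
  with \<open>finite halves\<close> show thesis
    by (intro that[of A]) (auto simp: halves_def intro!: Max_ge)
qed

text \<open>In a maximum cut among the sets of size \<open>\<lfloor>n/2\<rfloor>\<close>, a vertex on the larger side with more
  neighbours on its own side could be moved across (for odd \<open>n\<close>), or swapped with a vertex of the
  smaller side having the same defect (for even \<open>n\<close>), increasing the cut.\<close>

lemma max_half_cut_oriented_odd:
  assumes G: "simple_graph V E" and "odd (card V)" and A: "A \<subseteq> V" "card A = card V div 2"
    and max: "\<And>A'. A' \<subseteq> V \<Longrightarrow> card A' = card V div 2 \<Longrightarrow> cut_size V E A' \<le> cut_size V E A"
    and y: "y \<in> V - A"
  shows "nbdeg E y (V - A) \<le> nbdeg E y A"
proof (rule ccontr)
  assume "\<not> ?thesis"
  then have "cut_size V E A < cut_size V E (insert y A)"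
    using cut_size_insert_gt[OF G A(1) y] by simp
  also have "\<dots> = cut_size V E (V - insert y A)"
    using A y by (intro cut_size_complement[OF G, symmetric]) auto
  finally have "cut_size V E A < cut_size V E (V - insert y A)" .
  moreover have "finite A" using G A finite_subset unfolding simple_graph_def by blast
  with A y have "card (V - insert y A) = card V - (card V div 2 + 1)"
    by (subst card_Diff_subset) auto
  with \<open>odd (card V)\<close> have "card (V - insert y A) = card V div 2" by (auto elim!: oddE)
  ultimately show False using max[of "V - insert y A"] by auto
qed

lemma max_half_cut_oriented_even:
  assumes G: "simple_graph V E" and A: "A \<subseteq> V" "card A = card V div 2"
    and max: "\<And>A'. A' \<subseteq> V \<Longrightarrow> card A' = card V div 2 \<Longrightarrow> cut_size V E A' \<le> cut_size V E A"
    and y: "y \<in> V - A" "nbdeg E y A < nbdeg E y (V - A)" and x: "x \<in> A"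
  shows "nbdeg E x A \<le> nbdeg E x (V - A)"
proof (rule ccontr)
  assume "\<not> ?thesis"
  then have "cut_size V E A < cut_size V E (insert y (A - {x}))"
    using cut_size_swap_gt[OF G A(1) x y(1) _ y(2)] by simp
  moreover have "finite A" using G A finite_subset unfolding simple_graph_def by blast
  with x y have "card (insert y (A - {x})) = card A"
    using card_Diff_singleton[OF x] card_gt_0_iff[of A] by auto
  ultimately show False using max[of "insert y (A - {x})"] A x y by auto
qed

lemma exists_oriented_half:
  assumes G: "simple_graph V E" and "A0 \<subseteq> V" "card A0 = card V div 2"
  shows "\<exists>A \<subseteq> V. card A = card V div 2 \<and> cut_size V E A0 \<le> cut_size V E A \<and>
    (\<forall>b \<in> V - A. nbdeg E b (V - A) \<le> nbdeg E b A)"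
proof -
  have "finite V" using G unfolding simple_graph_def by auto
  obtain A where A: "A \<subseteq> V" "card A = card V div 2"
    and max: "\<And>A'. A' \<subseteq> V \<Longrightarrow> card A' = card V div 2 \<Longrightarrow> cut_size V E A' \<le> cut_size V E A"
    using exists_max_half_cut[OF \<open>finite V\<close> assms(2,3)] by blast
  have "cut_size V E A0 \<le> cut_size V E A" using max assms by blast
  show ?thesis
  proof (cases "odd (card V) \<or> (\<forall>b \<in> V - A. nbdeg E b (V - A) \<le> nbdeg E b A)")
    case True
    then show ?thesis
      using max_half_cut_oriented_odd[OF G _ A max] A \<open>cut_size V E A0 \<le> _\<close> by blast
  next
    case False
    then obtain y where "even (card V)" "y \<in> V - A" "nbdeg E y A < nbdeg E y (V - A)"
      by (auto simp: not_le)
    then have "\<forall>b \<in> V - (V - A). nbdeg E b (V - (V - A)) \<le> nbdeg E b (V - A)"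
      using max_half_cut_oriented_even[OF G A max] A(1) by (simp add: double_diff)
    moreover have "card (V - A) = card V div 2"
      using A \<open>finite V\<close> \<open>even (card V)\<close> by (auto simp: card_Diff_subset finite_subset elim!: evenE)
    moreover have "cut_size V E A0 \<le> cut_size V E (V - A)"
      using cut_size_complement[OF G A(1)] \<open>cut_size V E A0 \<le> _\<close> by simp
    ultimately show ?thesis by blast
  qed
qed

lemma card_ge_mult_le_sum:
  fixes g :: "'a \<Rightarrow> real"
  assumes "finite X" "\<And>x. x \<in> X \<Longrightarrow> 0 \<le> g x" "0 \<le> t"
  shows "real (card {x \<in> X. t \<le> g x}) * t \<le> (\<Sum>x\<in>X. g x)"
proof -
  have "real (card {x \<in> X. t \<le> g x}) * t = (\<Sum>x \<in> {x \<in> X. t \<le> g x}. t)" by simp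
  also have "\<dots> \<le> (\<Sum>x \<in> {x \<in> X. t \<le> g x}. g x)" by (rule sum_mono) simp
  also have "\<dots> \<le> (\<Sum>x\<in>X. g x)" using assms by (intro sum_mono2) auto
  finally show ?thesis .
qed

locale half_cut =
  fixes V :: "nat set" and E :: "nat \<Rightarrow> nat \<Rightarrow> bool" and A :: "nat set" and \<gamma> :: real
  assumes graph: "simple_graph V E"
    and min_deg: "min_degree_ge V E (real (card V) / 2)"
    and A_sub: "A \<subseteq> V" and card_A: "card A = card V div 2"
    and cut_large: "real (card A) * real (card V) / 2 - 2 * \<gamma> * real (card V) ^ 2 \<le> real (cut_size V E A)"
    and oriented: "\<forall>b \<in> V - A. nbdeg E b (V - A) \<le> nbdeg E b A"
    and gamma_pos: "0 < \<gamma>" and large: "1 / \<gamma> \<le> real (card V)"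
begin

abbreviation "N \<equiv> real (card V)"
abbreviation "B \<equiv> V - A"

lemma finite_V: "finite V" and E_sym: "E u v \<Longrightarrow> E v u"
  using graph unfolding simple_graph_def by auto

lemma finite_A: "finite A"
  using finite_subset[OF A_sub finite_V] .

lemma finite_B: "finite B"
  using finite_V by simp

lemma N_pos: "0 < N"
  using large gamma_pos by (smt (verit) divide_pos_pos)

lemma gamma_N: "1 \<le> \<gamma> * N"
  using large gamma_pos by (simp add: field_simps)

lemma card_A_bounds: "(N - 1) / 2 \<le> real (card A)" "real (card A) \<le> N / 2"
proof -
  have "2 * (card V div 2) \<le> card V" "card V \<le> 2 * (card V div 2) + 1" by presburger+
  then have "real (2 * (card V div 2)) \<le> N" "N \<le> real (2 * (card V div 2) + 1)"
    by (simp_all only: of_nat_le_iff)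
  then show "(N - 1) / 2 \<le> real (card A)" "real (card A) \<le> N / 2" unfolding card_A by simp_all
qed

lemma card_A_B: "real (card A) + real (card B) = N"
  using A_sub finite_A card_mono[OF finite_V A_sub] by (simp add: card_Diff_subset flip: of_nat_add)

lemma card_B_bounds: "N / 2 \<le> real (card B)" "real (card B) \<le> (N + 1) / 2"
  using card_A_bounds card_A_B by (simp_all add: field_simps)

lemma nbdeg_V: "nbdeg E x V = nbdeg E x A + nbdeg E x B"
  using nbdeg_Un_disjoint[OF finite_A finite_B, of E x] A_sub by (simp add: Un_absorb1)

lemma cut_size_eq_sum_B: "cut_size V E A = (\<Sum>b\<in>B. nbdeg E b A)"
  unfolding cut_size_def using sum_nbdeg_commute[OF finite_A finite_B] E_sym by blast

lemma missing_cross_edges: "real (card A) * real (card B) - real (cut_size V E A) \<le> 3 * \<gamma> * N\<^sup>2"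
proof -
  have "real (card A) * (real (card B) - N / 2) \<le> N / 2 * (1 / 2)"
    using card_A_bounds card_B_bounds N_pos by (intro mult_mono) auto
  also have "\<dots> \<le> \<gamma> * N\<^sup>2"
    using mult_left_mono[OF gamma_N, of N] N_pos by (simp add: power2_eq_square algebra_simps)
  finally show ?thesis using cut_large by (simp add: algebra_simps)
qed

lemma card_deficient_A:
  assumes "0 \<le> t"
  shows "real (card {a \<in> A. t \<le> real (card B) - real (nbdeg E a B)}) * t \<le> 3 * \<gamma> * N\<^sup>2"
proof -
  have "(\<Sum>a\<in>A. real (card B) - real (nbdeg E a B)) = real (card A) * real (card B) - real (cut_size V E A)"
    unfolding cut_size_def by (simp add: sum_subtractf)
  then show ?thesis
    using card_ge_mult_le_sum[OF finite_A _ assms, of "\<lambda>a. real (card B) - real (nbdeg E a B)"]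
      nbdeg_le_card[OF finite_B] missing_cross_edges by simp
qed

lemma card_deficient_B:
  assumes "0 \<le> t"
  shows "real (card {b \<in> B. t \<le> real (card A) - real (nbdeg E b A)}) * t \<le> 3 * \<gamma> * N\<^sup>2"
proof -
  have "(\<Sum>b\<in>B. real (card A) - real (nbdeg E b A)) = real (card A) * real (card B) - real (cut_size V E A)"
    unfolding cut_size_eq_sum_B by (simp add: sum_subtractf)
  then show ?thesis
    using card_ge_mult_le_sum[OF finite_B _ assms, of "\<lambda>b. real (card A) - real (nbdeg E b A)"]
      nbdeg_le_card[OF finite_A] missing_cross_edges by simp
qed

lemma min_degree_split: "v \<in> V \<Longrightarrow> N / 2 \<le> real (nbdeg E v A) + real (nbdeg E v B)"
  using min_deg nbdeg_V unfolding min_degree_ge_def by (metis of_nat_add)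

lemma nbdeg_A_ge_quarter: "b \<in> B \<Longrightarrow> N / 4 \<le> real (nbdeg E b A)"
  using min_degree_split[of b] oriented by force

end

locale half_cut_repair = half_cut +
  fixes \<nu> \<alpha> \<epsilon> :: real
  assumes nu: "0 < \<nu>" "\<nu> \<le> 1/6" and alpha: "0 < \<alpha>" "\<alpha> \<le> 1" and eps: "0 < \<epsilon>" "\<epsilon> \<le> 1"
    and gamma_le: "\<gamma> \<le> \<alpha> * \<epsilon> * \<nu> / 100"
    and large_alpha: "2 / \<alpha> \<le> N" and large_eps: "2 / \<epsilon> \<le> N"
begin

definition low :: "nat set" where
  "low = {a \<in> A. real (nbdeg E a B) < 3/2 * \<nu> * N}"

definition high :: "nat set" where
  "high = {b \<in> B. 3/2 * \<nu> * N \<le> real (nbdeg E b B)}"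

definition moved :: "nat set" where
  "moved = (SOME J. J \<subseteq> high \<and> card J = min (card low) (card high))"

definition A' :: "nat set" where
  "A' = A - low \<union> moved"

definition B' :: "nat set" where
  "B' = B - moved \<union> low"

lemma moved: "moved \<subseteq> high" "card moved = min (card low) (card high)"
proof -
  obtain J where "J \<subseteq> high" "card J = min (card low) (card high)"
    using obtain_subset_with_card_n[of "min (card low) (card high)" high] by auto
  then have "\<exists>J. J \<subseteq> high \<and> card J = min (card low) (card high)" by blast
  from someI_ex[OF this] show "moved \<subseteq> high" "card moved = min (card low) (card high)"
    unfolding moved_def by blast+
qed

lemma low_sub: "low \<subseteq> A" and moved_sub: "moved \<subseteq> B"
  using moved(1) unfolding low_def high_def by auto

lemma finite_low: "finite low" and finite_moved: "finite moved"
  using finite_subset[OF low_sub finite_A] finite_subset[OF moved_sub finite_B] .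

lemma card_moved_le: "card moved \<le> card low"
  using moved(2) by simp

lemma partition: "A' \<union> B' = V" "A' \<inter> B' = {}"
  unfolding A'_def B'_def using low_sub moved_sub A_sub by auto

lemma card_A': "real (card A') = real (card A) - real (card low) + real (card moved)"
proof -
  have "card A' = card (A - low) + card moved"
    unfolding A'_def using finite_A finite_moved moved_sub by (intro card_Un_disjoint) auto
  moreover have "card (A - low) = card A - card low" "card low \<le> card A"
    using card_Diff_subset[OF finite_low low_sub] card_mono[OF finite_A low_sub] by auto
  ultimately show ?thesis by simp
qed

lemma card_B': "real (card B') = real (card B) - real (card moved) + real (card low)"
proof -
  have "card B' = card (B - moved) + card low"
    unfolding B'_def using finite_B finite_low low_sub by (intro card_Un_disjoint) auto
  moreover have "card (B - moved) = card B - card moved" "card moved \<le> card B"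
    using card_Diff_subset[OF finite_moved moved_sub] card_mono[OF finite_B moved_sub] by auto
  ultimately show ?thesis by simp
qed

lemma nbdeg_A'_ge: "real (nbdeg E x A) - real (card low) \<le> real (nbdeg E x A')"
  using nbdeg_le_nbdeg_Diff_Un[OF finite_A finite_low finite_moved, of E x] unfolding A'_def by linarith

lemma nbdeg_B'_ge: "real (nbdeg E x B) - real (card low) \<le> real (nbdeg E x B')"
  using nbdeg_le_nbdeg_Diff_Un[OF finite_B finite_moved finite_low, of E x] card_moved_le
  unfolding B'_def by linarith

lemma nbdeg_B'_le: "real (nbdeg E x B') \<le> real (nbdeg E x B) + real (card low)"
  using nbdeg_Diff_Un_le[OF finite_B finite_low, of E x moved] unfolding B'_def by linarith

lemma nu_N: "\<nu> * N \<le> N / 6"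
  using mult_right_mono[OF nu(2), of N] N_pos by simp

lemma card_low: "real (card low) \<le> 12 * \<gamma> * N"
proof -
  have "low \<subseteq> {a \<in> A. N / 4 \<le> real (card B) - real (nbdeg E a B)}"
    unfolding low_def using card_B_bounds nu_N by auto
  then have "real (card low) * (N / 4) \<le> real (card {a \<in> A. N / 4 \<le> real (card B) - real (nbdeg E a B)}) * (N / 4)"
    using finite_A N_pos by (intro mult_right_mono of_nat_mono card_mono) auto
  also have "\<dots> \<le> 3 * \<gamma> * N\<^sup>2"
    using card_deficient_A[of "N / 4"] N_pos by simp
  finally show ?thesis using N_pos by (simp add: power2_eq_square field_simps)
qed

lemma card_low_small:
  "real (card low) \<le> \<nu> * N / 2" "real (card low) \<le> \<epsilon> * N / 2" "real (card low) \<le> \<alpha> * N / 4"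
proof -
  have "\<alpha> * \<epsilon> * \<nu> \<le> \<nu>" "\<alpha> * \<epsilon> * \<nu> \<le> \<epsilon>" "\<alpha> * \<epsilon> * \<nu> \<le> \<alpha>"
    using alpha eps nu by (simp_all add: mult_le_one mult_left_le_one_le mult_right_le_one_le
        mult.assoc mult.left_commute)
  moreover have "12 * \<gamma> \<le> \<alpha> * \<epsilon> * \<nu> / 8" using gamma_le gamma_pos by simp
  ultimately have "12 * \<gamma> * N \<le> \<nu> * N / 8" "12 * \<gamma> * N \<le> \<epsilon> * N / 8" "12 * \<gamma> * N \<le> \<alpha> * N / 8"
    using N_pos by (auto intro!: mult_right_mono)
  moreover have "0 \<le> \<nu> * N" "0 \<le> \<epsilon> * N" "0 \<le> \<alpha> * N"
    using alpha eps nu N_pos by simp_all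
  ultimately show "real (card low) \<le> \<nu> * N / 2" "real (card low) \<le> \<epsilon> * N / 2" "real (card low) \<le> \<alpha> * N / 4"
    using card_low by linarith+
qed

lemma sides_balanced: "0 \<le> real (card B') - real (card A')" "real (card B') - real (card A') \<le> \<alpha> * N"
proof -
  have diff: "real (card B') - real (card A') = real (card B) - real (card A) + 2 * (real (card low) - real (card moved))"
    using card_A' card_B' by simp
  have "2 \<le> \<alpha> * N" using large_alpha alpha by (simp add: field_simps)
  moreover have "real (card moved) \<le> real (card low)" using card_moved_le by simp
  ultimately show "0 \<le> real (card B') - real (card A')" and "real (card B') - real (card A') \<le> \<alpha> * N"
    unfolding diff using card_A_bounds card_B_bounds card_low_small(3) by simp_all
qed

lemma card_bound_from_deficiency:
  assumes "0 < c" and "real k * (\<epsilon> * N / c) \<le> 3 * \<gamma> * N\<^sup>2"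
  shows "real k \<le> c * \<alpha> * N / 200"
proof -
  have "\<alpha> * \<epsilon> * \<nu> \<le> \<alpha> * \<epsilon> / 6"
    using mult_left_mono[OF nu(2), of "\<alpha> * \<epsilon>"] alpha eps by simp
  then have "\<gamma> \<le> \<alpha> * \<epsilon> / 600" using gamma_le by linarith
  then have "3 * \<gamma> * N\<^sup>2 \<le> 3 * (\<alpha> * \<epsilon> / 600) * N\<^sup>2" by (intro mult_right_mono) simp_all
  also have "\<dots> = (c * \<alpha> * N / 200) * (\<epsilon> * N / c)"
    using \<open>0 < c\<close> by (simp add: power2_eq_square field_simps)
  finally have "3 * \<gamma> * N\<^sup>2 \<le> (c * \<alpha> * N / 200) * (\<epsilon> * N / c)" .
  with assms have "real k * (\<epsilon> * N / c) \<le> (c * \<alpha> * N / 200) * (\<epsilon> * N / c)" by linarith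
  then show ?thesis by (rule mult_right_le_imp_le) (use \<open>0 < c\<close> eps N_pos in simp)
qed

lemma A'_nbdeg_ge: "a \<in> A' \<Longrightarrow> \<nu> * N \<le> real (nbdeg E a B')"
  using nbdeg_B'_ge[of a] card_low_small(1) moved(1)
  unfolding A'_def low_def high_def by auto

lemma few_A'_low_degree: "real (card {a \<in> A'. real (nbdeg E a B') < (1/2 - \<epsilon>) * N}) \<le> \<alpha> * N"
proof -
  define bad where "bad = {a \<in> A. \<epsilon> * N / 2 \<le> real (card B) - real (nbdeg E a B)}"
  have "{a \<in> A'. real (nbdeg E a B') < (1/2 - \<epsilon>) * N} \<subseteq> moved \<union> bad"
  proof
    fix a assume a: "a \<in> {a \<in> A'. real (nbdeg E a B') < (1/2 - \<epsilon>) * N}"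
    have "\<epsilon> * N / 2 \<le> real (card B) - real (nbdeg E a B)"
      using a nbdeg_B'_ge[of a] card_B_bounds card_low_small(2) by (simp add: left_diff_distrib)
    then show "a \<in> moved \<union> bad" using a unfolding A'_def bad_def by auto
  qed
  then have "card {a \<in> A'. real (nbdeg E a B') < (1/2 - \<epsilon>) * N} \<le> card (moved \<union> bad)"
    using finite_moved finite_A unfolding bad_def by (intro card_mono) auto
  also have "\<dots> \<le> card moved + card bad" by (rule card_Un_le)
  finally have "real (card {a \<in> A'. real (nbdeg E a B') < (1/2 - \<epsilon>) * N}) \<le> real (card moved) + real (card bad)"
    by (simp flip: of_nat_add)
  moreover have "real (card bad) \<le> 2 * \<alpha> * N / 200"
    using card_deficient_A[of "\<epsilon> * N / 2"] eps N_pos unfolding bad_def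
    by (intro card_bound_from_deficiency) simp_all
  moreover have "real (card moved) \<le> real (card low)" "0 \<le> \<alpha> * N" using card_moved_le alpha N_pos by simp_all
  ultimately show ?thesis using card_low_small(3) by linarith
qed

lemma few_B'_low_degree: "real (card {b \<in> B'. real (nbdeg E b A') < (1/2 - \<epsilon>) * N}) \<le> \<alpha> * N"
proof -
  define bad where "bad = {b \<in> B. \<epsilon> * N / 4 \<le> real (card A) - real (nbdeg E b A)}"
  have "2 \<le> \<epsilon> * N" using large_eps eps by (simp add: field_simps)
  have "{b \<in> B'. real (nbdeg E b A') < (1/2 - \<epsilon>) * N} \<subseteq> low \<union> bad"
  proof
    fix b assume b: "b \<in> {b \<in> B'. real (nbdeg E b A') < (1/2 - \<epsilon>) * N}"
    have "\<epsilon> * N / 4 \<le> real (card A) - real (nbdeg E b A)"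
      using b nbdeg_A'_ge[of b] card_A_bounds card_low_small(2) \<open>2 \<le> \<epsilon> * N\<close>
      by (simp add: left_diff_distrib)
    then show "b \<in> low \<union> bad" using b unfolding B'_def bad_def by auto
  qed
  then have "card {b \<in> B'. real (nbdeg E b A') < (1/2 - \<epsilon>) * N} \<le> card (low \<union> bad)"
    using finite_low finite_V unfolding bad_def by (intro card_mono) auto
  also have "\<dots> \<le> card low + card bad" by (rule card_Un_le)
  finally have "real (card {b \<in> B'. real (nbdeg E b A') < (1/2 - \<epsilon>) * N}) \<le> real (card low) + real (card bad)"
    by (simp flip: of_nat_add)
  moreover have "real (card bad) \<le> 4 * \<alpha> * N / 200"
    using card_deficient_B[of "\<epsilon> * N / 4"] eps N_pos unfolding bad_def
    by (intro card_bound_from_deficiency) simp_all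
  moreover have "0 \<le> \<alpha> * N" using alpha N_pos by simp
  ultimately show ?thesis using card_low_small(3) by linarith
qed

lemma B'_nbdeg_ge: "b \<in> B' \<Longrightarrow> (1/4 - \<epsilon>) * N \<le> real (nbdeg E b A')"
proof -
  assume "b \<in> B'"
  have "N / 4 \<le> real (nbdeg E b A)"
  proof (cases "b \<in> low")
    case True
    then show ?thesis using min_degree_split[of b] A_sub nu_N unfolding low_def by (auto simp: mult.assoc)
  next
    case False
    then show ?thesis using \<open>b \<in> B'\<close> nbdeg_A_ge_quarter unfolding B'_def by auto
  qed
  then show ?thesis
    using nbdeg_A'_ge[of b] card_low_small(2) eps N_pos by (simp add: left_diff_distrib)
qed

text \<open>If the sides are not balanced exactly, too few high-degree vertices of \<open>B\<close> were
  available, so all of them were moved.\<close>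

lemma B'_sparse_if_unbalanced:
  assumes "card A' \<noteq> card V div 2" and "b \<in> B'"
  shows "real (nbdeg E b B') \<le> 2 * \<nu> * N"
proof -
  have "card moved \<noteq> card low"
  proof
    assume "card moved = card low"
    then have "real (card A') = real (card A)" using card_A' by simp
    with assms(1) card_A show False by simp
  qed
  then have "card moved = card high" using moved(2) by (simp add: min_def split: if_splits)
  moreover have "finite high" using finite_V unfolding high_def by simp
  ultimately have "moved = high" using card_subset_eq[OF _ moved(1)] by simp
  then have "b \<in> low \<or> b \<in> B - high" using \<open>b \<in> B'\<close> unfolding B'_def by blast
  then have "real (nbdeg E b B) < 3/2 * \<nu> * N" unfolding low_def high_def by auto
  then show ?thesis using nbdeg_B'_le[of b] card_low_small(1) by linarith
qed

lemma superextremal: "superextremal_biclique \<alpha> \<epsilon> \<nu> V E"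
  unfolding superextremal_biclique_def Let_def
proof (intro exI conjI)
  show "A' \<union> B' = V" "A' \<inter> B' = {}" by (fact partition)+
qed (use sides_balanced few_A'_low_degree A'_nbdeg_ge few_B'_low_degree B'_nbdeg_ge
    B'_sparse_if_unbalanced in auto)

end

lemma superextremal_if_close:
  assumes G: "simple_graph V E" and deg: "min_degree_ge V E (real (card V) / 2)"
    and close: "gamma_close \<gamma> V E"
    and "0 < \<nu>" "\<nu> \<le> 1/6" "0 < \<alpha>" "\<alpha> \<le> 1" "0 < \<epsilon>" "\<epsilon> \<le> 1"
    and "0 < \<gamma>" "\<gamma> \<le> \<alpha> * \<epsilon> * \<nu> / 100"
    and "1 / \<gamma> \<le> real (card V)" "2 / \<alpha> \<le> real (card V)" "2 / \<epsilon> \<le> real (card V)"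
  shows "superextremal_biclique \<alpha> \<epsilon> \<nu> V E"
proof -
  obtain A0 where A0: "A0 \<subseteq> V" "card A0 = card V div 2"
    and sparse: "real (edges_in E A0) \<le> \<gamma> * real (card V) ^ 2"
    using close unfolding gamma_close_def Let_def by auto
  obtain A where A: "A \<subseteq> V" "card A = card V div 2" "cut_size V E A0 \<le> cut_size V E A"
    and oriented: "\<forall>b \<in> V - A. nbdeg E b (V - A) \<le> nbdeg E b A"
    using exists_oriented_half[OF G A0] by blast
  have "real (card A) * real (card V) / 2 - 2 * \<gamma> * real (card V) ^ 2 \<le> real (cut_size V E A)"
    using cut_size_ge[OF G deg A0(1)] sparse A0(2) A(2,3) by simp
  then interpret half_cut_repair V E A \<gamma> \<nu> \<alpha> \<epsilon>
    using assms A oriented by unfold_locales auto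
  show ?thesis by (fact superextremal)
qed

lemma superextremal_for_large_n:
  assumes "0 < \<nu>" "\<nu> \<le> 1/6" "0 < \<alpha>" "\<alpha> \<le> 1" "0 < \<epsilon>" "\<epsilon> \<le> 1"
    and "0 < \<gamma>" "\<gamma> \<le> \<alpha> * \<epsilon> * \<nu> / 100"
  shows "\<exists>n\<^sub>0::nat. \<forall>n\<ge>n\<^sub>0. \<forall>V E.
           simple_graph V E \<and> card V = n \<and> min_degree_ge V E (real n / 2) \<and>
           gamma_close \<gamma> V E \<longrightarrow> superextremal_biclique \<alpha> \<epsilon> \<nu> V E"
proof (intro exI[of _ "nat \<lceil>1/\<gamma> + 2/\<alpha> + 2/\<epsilon>\<rceil>"] allI impI; elim conjE)
  fix n V E assume n: "nat \<lceil>1/\<gamma> + 2/\<alpha> + 2/\<epsilon>\<rceil> \<le> n" and "card V = n"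
    and "simple_graph V E" "min_degree_ge V E (real n / 2)" "gamma_close \<gamma> V E"
  have "1/\<gamma> + 2/\<alpha> + 2/\<epsilon> \<le> real (nat \<lceil>1/\<gamma> + 2/\<alpha> + 2/\<epsilon>\<rceil>)"
    by (rule real_nat_ceiling_ge)
  also have "\<dots> \<le> real (card V)"
    using n \<open>card V = n\<close> by (simp only: of_nat_le_iff)
  finally have "1/\<gamma> + 2/\<alpha> + 2/\<epsilon> \<le> real (card V)" .
  moreover have "0 < 1/\<gamma>" "0 < 2/\<alpha>" "0 < 2/\<epsilon>" using assms by simp_all
  ultimately have "1/\<gamma> \<le> real (card V)" "2/\<alpha> \<le> real (card V)" "2/\<epsilon> \<le> real (card V)"
    by linarith+
  with assms \<open>simple_graph V E\<close> \<open>card V = n\<close> \<open>min_degree_ge V E (real n / 2)\<close> \<open>gamma_close \<gamma> V E\<close>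
  show "superextremal_biclique \<alpha> \<epsilon> \<nu> V E"
    by (intro superextremal_if_close) simp_all
qed

theorem mainTheorem11:
  shows "\<exists>\<nu>\<^sub>0>0. \<forall>\<nu>. 0 < \<nu> \<and> \<nu> \<le> \<nu>\<^sub>0 \<longrightarrow>
    (\<exists>\<alpha>\<^sub>0>0. \<forall>\<alpha> \<epsilon>. 0 < \<alpha> \<and> \<alpha> \<le> \<alpha>\<^sub>0 \<and> 0 < \<epsilon> \<and> \<epsilon> \<le> \<alpha>\<^sub>0 \<longrightarrow>
      (\<exists>\<gamma>\<^sub>0>0. \<forall>\<gamma>. 0 < \<gamma> \<and> \<gamma> \<le> \<gamma>\<^sub>0 \<longrightarrow>
        (\<exists>n\<^sub>0::nat. \<forall>n\<ge>n\<^sub>0. \<forall>V E.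
           simple_graph V E \<and> card V = n \<and> min_degree_ge V E (real n / 2) \<and>
           gamma_close \<gamma> V E \<longrightarrow> superextremal_biclique \<alpha> \<epsilon> \<nu> V E)))"
  apply (rule exI[of _ "1/6"], intro conjI allI impI, simp)
  apply (rule exI[of _ 1], intro conjI allI impI, simp)
  subgoal for \<nu> \<alpha> \<epsilon>
    by (intro exI[of _ "\<alpha> * \<epsilon> * \<nu> / 100"] conjI allI impI superextremal_for_large_n) auto
  done

end
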